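(* It is undecidable whether, for an arbitrary ranked alphabet $\Sigma$, computable strong bimonoid $B$, and bottom-up deterministic $(\Sigma,B)$-wta $\mathcal{A}$, the wta $\mathcal{A}$ has the finite order property.
   Context: Ranked alphabet $\Sigma$ ($\Sigma^{(0)}\ne\emptyset$). Strong bimonoid $(B,\oplus,\otimes,\mathbb{0},\mathbb{1})$: commutative monoid $(B,\oplus,\mathbb{0})$, monoid $(B,\otimes,\mathbb{1})$, $\mathbb{0}\ne\mathbb{1}$, $\mathbb{0}$ absorbing; computable if $B$ is recursive and $\oplus,\otimes$ computable. For $b\in B$, $nb$ is the $n$-fold sum; $b$ has finite order in $(B,\oplus,\mathbb{0})$ if $\{nb\mid n\in\mathbb{N}\}$ is finite. $(\Sigma,B)$-wta $\mathcal{A}=(Q,\delta,F)$: $Q$ finite nonempty, $\delta_k:Q^k\times\Sigma^{(k)}\times Q\to B$, $F:Q\to B$; bottom-up deterministic if for all $k,\sigma,q_1,\dots,q_k$ at most one $q$ has $\delta_k(q_1\dots q_k,\sigma,q)\ne\mathbb{0}$. $H_{\mathcal{A}}$ is the smallest subset of $B$ containing $\bigcup_k\mathrm{im}(\delta_k)$ and closed under $\otimes$. $\mathcal{A}$ has the finite order property if $H_{\mathcal{A}}$ is finite and every element of $\{a\otimes c\mid a\in H_{\mathcal{A}},c\in\mathrm{im}(F)\}$ has finite order in $(B,\oplus,\mathbb{0})$. *)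

theory Defs
  imports Main "HOL-Library.Nat_Bijection"
begin

definition strong_bimonoid ::
  "'b set \<Rightarrow> ('b \<Rightarrow> 'b \<Rightarrow> 'b) \<Rightarrow> ('b \<Rightarrow> 'b \<Rightarrow> 'b) \<Rightarrow> 'b \<Rightarrow> 'b \<Rightarrow> bool" where
  "strong_bimonoid B add mul zero one \<longleftrightarrow>
     zero \<in> B \<and> one \<in> B \<and>
     (\<forall>x\<in>B. \<forall>y\<in>B. add x y \<in> B \<and> mul x y \<in> B) \<and>
     (\<forall>x\<in>B. \<forall>y\<in>B. \<forall>z\<in>B. add (add x y) z = add x (add y z)) \<and>
     (\<forall>x\<in>B. \<forall>y\<in>B. add x y = add y x) \<and>
     (\<forall>x\<in>B. add zero x = x) \<and>
     (\<forall>x\<in>B. \<forall>y\<in>B. \<forall>z\<in>B. mul (mul x y) z = mul x (mul y z)) \<and>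
     (\<forall>x\<in>B. mul one x = x \<and> mul x one = x) \<and>
     zero \<noteq> one \<and>
     (\<forall>x\<in>B. mul zero x = zero \<and> mul x zero = zero)"

definition nfold :: "('b \<Rightarrow> 'b \<Rightarrow> 'b) \<Rightarrow> 'b \<Rightarrow> nat \<Rightarrow> 'b \<Rightarrow> 'b" where
  "nfold add zero n b = ((add b) ^^ n) zero"

definition finite_order :: "('b \<Rightarrow> 'b \<Rightarrow> 'b) \<Rightarrow> 'b \<Rightarrow> 'b \<Rightarrow> bool" where
  "finite_order add zero b \<longleftrightarrow> finite {nfold add zero n b | n. True}"

text \<open>A wta over the ranked alphabet (Sig, rank) with state set Q, transition
  function delta (delta qs sigma q = delta_k(q_1..q_k, sigma, q) with k = length qs)
  and root weight F.\<close>

definition im_delta ::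
  "'s set \<Rightarrow> ('s \<Rightarrow> nat) \<Rightarrow> 'q set \<Rightarrow> ('q list \<Rightarrow> 's \<Rightarrow> 'q \<Rightarrow> 'b) \<Rightarrow> 'b set" where
  "im_delta Sig rank Q delta =
     {delta qs \<sigma> q | qs \<sigma> q. \<sigma> \<in> Sig \<and> length qs = rank \<sigma> \<and> set qs \<subseteq> Q \<and> q \<in> Q}"

inductive_set mult_closure :: "('b \<Rightarrow> 'b \<Rightarrow> 'b) \<Rightarrow> 'b set \<Rightarrow> 'b set"
  for mul :: "'b \<Rightarrow> 'b \<Rightarrow> 'b" and D :: "'b set" where
  base: "x \<in> D \<Longrightarrow> x \<in> mult_closure mul D"
| mult: "x \<in> mult_closure mul D \<Longrightarrow> y \<in> mult_closure mul D \<Longrightarrow>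
         mul x y \<in> mult_closure mul D"

definition wta_H ::
  "('b \<Rightarrow> 'b \<Rightarrow> 'b) \<Rightarrow> 's set \<Rightarrow> ('s \<Rightarrow> nat) \<Rightarrow> 'q set \<Rightarrow> ('q list \<Rightarrow> 's \<Rightarrow> 'q \<Rightarrow> 'b) \<Rightarrow> 'b set" where
  "wta_H mul Sig rank Q delta = mult_closure mul (im_delta Sig rank Q delta)"

definition bu_deterministic ::
  "'b \<Rightarrow> 's set \<Rightarrow> ('s \<Rightarrow> nat) \<Rightarrow> 'q set \<Rightarrow> ('q list \<Rightarrow> 's \<Rightarrow> 'q \<Rightarrow> 'b) \<Rightarrow> bool" where
  "bu_deterministic zero Sig rank Q delta \<longleftrightarrow>
     (\<forall>\<sigma>\<in>Sig. \<forall>qs. length qs = rank \<sigma> \<and> set qs \<subseteq> Q \<longrightarrow>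
        (\<forall>q\<in>Q. \<forall>q'\<in>Q. delta qs \<sigma> q \<noteq> zero \<and> delta qs \<sigma> q' \<noteq> zero \<longrightarrow> q = q'))"

definition finite_order_property ::
  "('b \<Rightarrow> 'b \<Rightarrow> 'b) \<Rightarrow> ('b \<Rightarrow> 'b \<Rightarrow> 'b) \<Rightarrow> 'b \<Rightarrow> 's set \<Rightarrow> ('s \<Rightarrow> nat) \<Rightarrow> 'q set
     \<Rightarrow> ('q list \<Rightarrow> 's \<Rightarrow> 'q \<Rightarrow> 'b) \<Rightarrow> ('q \<Rightarrow> 'b) \<Rightarrow> bool" where
  "finite_order_property add mul zero Sig rank Q delta F \<longleftrightarrow>
     finite (wta_H mul Sig rank Q delta) \<and>
     (\<forall>a\<in>wta_H mul Sig rank Q delta. \<forall>c\<in>F ` Q. finite_order add zero (mul a c))"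

datatype recf = Zf | Sf | Idf nat | Cnf recf "recf list" | Prf recf recf | Mnf recf

inductive eval :: "recf \<Rightarrow> nat list \<Rightarrow> nat \<Rightarrow> bool" where
  zero: "eval Zf xs 0"
| succ: "eval Sf (x # xs) (Suc x)"
| proj: "i < length xs \<Longrightarrow> eval (Idf i) xs (xs ! i)"
| comp: "length ys = length gs \<Longrightarrow> (\<forall>i < length gs. eval (gs ! i) xs (ys ! i)) \<Longrightarrow>
         eval f ys z \<Longrightarrow> eval (Cnf f gs) xs z"
| prim0: "eval f xs y \<Longrightarrow> eval (Prf f g) (0 # xs) y"
| primS: "eval (Prf f g) (n # xs) y \<Longrightarrow> eval g (n # y # xs) z \<Longrightarrow>
          eval (Prf f g) (Suc n # xs) z"
| mu: "eval f (n # xs) 0 \<Longrightarrow> (\<forall>i<n. \<exists>y. eval f (i # xs) y \<and> y > 0) \<Longrightarrow>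
       eval (Mnf f) xs n"

fun recf_encode :: "recf \<Rightarrow> nat" where
  "recf_encode Zf = prod_encode (0, 0)"
| "recf_encode Sf = prod_encode (1, 0)"
| "recf_encode (Idf i) = prod_encode (2, i)"
| "recf_encode (Cnf f gs) =
     prod_encode (3, prod_encode (recf_encode f, list_encode (map recf_encode gs)))"
| "recf_encode (Prf f g) = prod_encode (4, prod_encode (recf_encode f, recf_encode g))"
| "recf_encode (Mnf f) = prod_encode (5, recf_encode f)"

text \<open>An instance: ranked alphabet {0..<length rk} with rank sigma = rk ! sigma;
  computable strong bimonoid with carrier B = {x. memB outputs 1 on x} (a recursive
  subset of nat), operations computed by addB / mulB, constants zeroB, oneB;
  bottom-up deterministic wta with states {0..<nQ}, transitions given by a finite
  table (unlisted transitions have weight zeroB; first matching entry counts) and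
  root weights Fl.\<close>
record wta_inst =
  rk :: "nat list"
  memB :: recf
  addB :: recf
  mulB :: recf
  zeroB :: nat
  oneB :: nat
  nQ :: nat
  dtab :: "((nat list \<times> nat \<times> nat) \<times> nat) list"
  Fl :: "nat list"

definition Bset :: "wta_inst \<Rightarrow> nat set" where
  "Bset I = {x. eval (memB I) [x] 1}"

definition plusI :: "wta_inst \<Rightarrow> nat \<Rightarrow> nat \<Rightarrow> nat" where
  "plusI I x y = (THE z. eval (addB I) [x, y] z)"

definition timesI :: "wta_inst \<Rightarrow> nat \<Rightarrow> nat \<Rightarrow> nat" where
  "timesI I x y = (THE z. eval (mulB I) [x, y] z)"

definition SigI :: "wta_inst \<Rightarrow> nat set" where
  "SigI I = {..<length (rk I)}"

definition rankI :: "wta_inst \<Rightarrow> nat \<Rightarrow> nat" where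
  "rankI I \<sigma> = rk I ! \<sigma>"

definition QI :: "wta_inst \<Rightarrow> nat set" where
  "QI I = {..<nQ I}"

definition deltaI :: "wta_inst \<Rightarrow> nat list \<Rightarrow> nat \<Rightarrow> nat \<Rightarrow> nat" where
  "deltaI I qs \<sigma> q = (case map_of (dtab I) (qs, \<sigma>, q) of Some b \<Rightarrow> b | None \<Rightarrow> zeroB I)"

definition FI :: "wta_inst \<Rightarrow> nat \<Rightarrow> nat" where
  "FI I q = Fl I ! q"

definition valid_instance :: "wta_inst \<Rightarrow> bool" where
  "valid_instance I \<longleftrightarrow>
     0 \<in> set (rk I) \<and>
     (\<forall>x. eval (memB I) [x] 0 \<or> eval (memB I) [x] 1) \<and>
     (\<forall>x\<in>Bset I. \<forall>y\<in>Bset I. \<exists>z. eval (addB I) [x, y] z) \<and>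
     (\<forall>x\<in>Bset I. \<forall>y\<in>Bset I. \<exists>z. eval (mulB I) [x, y] z) \<and>
     strong_bimonoid (Bset I) (plusI I) (timesI I) (zeroB I) (oneB I) \<and>
     nQ I > 0 \<and>
     (\<forall>e\<in>set (dtab I). snd e \<in> Bset I) \<and>
     length (Fl I) = nQ I \<and> set (Fl I) \<subseteq> Bset I \<and>
     bu_deterministic (zeroB I) (SigI I) (rankI I) (QI I) (deltaI I)"

definition fop_instance :: "wta_inst \<Rightarrow> bool" where
  "fop_instance I \<longleftrightarrow>
     finite_order_property (plusI I) (timesI I) (zeroB I) (SigI I) (rankI I) (QI I)
       (deltaI I) (FI I)"

definition encode_instance :: "wta_inst \<Rightarrow> nat" where
  "encode_instance I = list_encode
     [list_encode (rk I), recf_encode (memB I), recf_encode (addB I), recf_encode (mulB I),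
      zeroB I, oneB I, nQ I,
      list_encode (map (\<lambda>((qs, \<sigma>, q), b).
          prod_encode (prod_encode (list_encode qs, prod_encode (\<sigma>, q)), b)) (dtab I)),
      list_encode (Fl I)]"

end

theory Submission
  imports Defs
begin

text \<open>Suppose a program \<open>D\<close> decided the finite order property. We build an instance whose
  transition and root weights are all \<open>1\<close>, over the natural numbers with the truncated
  addition \<open>x \<oplus> y = c (x + y)\<close>, where \<open>c n\<close> counts the \<open>s < n\<close> such that \<open>D\<close>, run for
  \<open>s - 1\<close> steps on the code of this very instance, has not yet answered \<open>0\<close>. If \<open>D\<close>
  answers \<open>0\<close> and \<open>L\<close> is the least time at which this shows, then \<open>c n = min n L\<close> and
  \<open>1\<close> has finite order; otherwise \<open>c\<close> is the identity and \<open>1\<close> has infinite order. So the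
  instance has the finite order property exactly when \<open>D\<close> answers \<open>0\<close> on it, which
  contradicts the choice of \<open>D\<close>.

  The addition is computable because bounded runs of \<open>D\<close> are computed by a total program.
  It can refer to the code of its own instance because it receives its own code \<open>k\<close> as an
  extra argument, and the code of the instance is computable from \<open>k\<close>.\<close>

section \<open>Determinism and some primitive recursive programs\<close>

inductive_cases eval_ZfE: "eval Zf xs y"
inductive_cases eval_SfE: "eval Sf xs y"
inductive_cases eval_IdfE: "eval (Idf i) xs y"
inductive_cases eval_CnfE: "eval (Cnf f gs) xs y"
inductive_cases eval_PrfE: "eval (Prf f g) xs y"
inductive_cases eval_MnfE: "eval (Mnf f) xs y"

lemma eval_deterministic: "eval f xs y \<Longrightarrow> eval f xs z \<Longrightarrow> y = z"
proof (induction arbitrary: z rule: eval.induct)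
  case zero
  then show ?case by (blast elim: eval_ZfE)
next
  case succ
  then show ?case by (blast elim: eval_SfE)
next
  case proj
  then show ?case by (blast elim: eval_IdfE)
next
  case (comp ys gs xs f y)
  from comp.prems obtain ys' where ys': "length ys' = length gs"
    "\<forall>i<length gs. eval (gs ! i) xs (ys' ! i)" "eval f ys' z"
    by (elim eval_CnfE) blast
  have "ys = ys'"
  proof (rule nth_equalityI)
    show "length ys = length ys'" using comp.hyps(1) ys'(1) by simp
    show "ys ! i = ys' ! i" if "i < length ys" for i
      using that comp.hyps(1) comp.IH(1) ys'(2) by auto
  qed
  then show ?case using comp.IH(2) ys'(3) by blast
next
  case (prim0 f xs y g)
  from prim0.prems show ?case by (rule eval_PrfE) (use prim0.IH in auto)
next
  case (primS f g n xs y z z')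
  from primS.prems obtain y' where "eval (Prf f g) (n # xs) y'" "eval g (n # y' # xs) z'"
    by (rule eval_PrfE) auto
  then show ?case using primS.IH by metis
next
  case (mu f n xs z)
  from mu.prems have z: "eval f (z # xs) 0" "\<forall>i<z. \<exists>y. eval f (i # xs) y \<and> y > 0"
    by (rule eval_MnfE, auto)+
  have "\<not> n < z" using z(2) mu.IH(1) by fastforce
  moreover have "\<not> z < n" using z(1) mu.IH(2) by fastforce
  ultimately show ?case by simp
qed

lemma eval_Cnf_list_all2:
  "list_all2 (\<lambda>g y. eval g xs y) gs ys \<Longrightarrow> eval f ys z \<Longrightarrow> eval (Cnf f gs) xs z"
  by (rule eval.comp) (auto simp: list_all2_conv_all_nth)

lemma eval_Cnf1: "eval g xs a \<Longrightarrow> eval f [a] z \<Longrightarrow> eval (Cnf f [g]) xs z"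
  by (rule eval_Cnf_list_all2[where ys = "[a]"]) auto

lemma eval_Cnf2:
  "eval g1 xs a \<Longrightarrow> eval g2 xs b \<Longrightarrow> eval f [a, b] z \<Longrightarrow> eval (Cnf f [g1, g2]) xs z"
  by (rule eval_Cnf_list_all2[where ys = "[a, b]"]) auto

lemma eval_Cnf3:
  "eval g1 xs a \<Longrightarrow> eval g2 xs b \<Longrightarrow> eval g3 xs c \<Longrightarrow> eval f [a, b, c] z \<Longrightarrow>
   eval (Cnf f [g1, g2, g3]) xs z"
  by (rule eval_Cnf_list_all2[where ys = "[a, b, c]"]) auto

lemma eval_Prf_iterate:
  assumes "eval f xs (h 0)" and "\<And>k. eval g (k # h k # xs) (h (Suc k))" and "y = h n"
  shows "eval (Prf f g) (n # xs) y"
  unfolding \<open>y = h n\<close> by (induction n) (use assms(1,2) in \<open>auto intro: eval.intros\<close>)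

lemma eval_Sf_eq: "z = Suc x \<Longrightarrow> eval Sf (x # xs) z"
  using eval.succ by simp

lemma eval_Idf_eq: "i < length xs \<Longrightarrow> z = xs ! i \<Longrightarrow> eval (Idf i) xs z"
  using eval.proj by simp

lemma eval_Idf_shifted:
  "length pre = c \<Longrightarrow>
   list_all2 (\<lambda>g y. eval g (pre @ ys) y) (map (\<lambda>i. Idf (i + c)) [0..<length ys]) ys"
  by (auto simp: list_all2_conv_all_nth nth_append intro!: eval_Idf_eq)

fun recf_const :: "nat \<Rightarrow> recf" where
  "recf_const 0 = Zf"
| "recf_const (Suc n) = Cnf Sf [recf_const n]"

lemma eval_recf_const: "z = n \<Longrightarrow> eval (recf_const n) xs z"
  by (induction n arbitrary: z) (auto intro: eval.intros eval_Cnf1)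

definition add_prog :: recf where
  "add_prog = Prf (Idf 0) (Cnf Sf [Idf 1])"

lemma eval_add_prog: "eval add_prog [x, y] (x + y)"
  unfolding add_prog_def
  by (rule eval_Prf_iterate[where h = "\<lambda>k. k + y"]) (auto intro!: eval_Cnf1 eval_Idf_eq eval_Sf_eq)

definition add_of :: "recf \<Rightarrow> recf \<Rightarrow> recf" where
  "add_of a b = Cnf add_prog [a, b]"

lemma eval_add_of: "eval a xs x \<Longrightarrow> eval b xs y \<Longrightarrow> z = x + y \<Longrightarrow> eval (add_of a b) xs z"
  unfolding add_of_def using eval_Cnf2 eval_add_prog by blast

definition mult_prog :: recf where
  "mult_prog = Prf Zf (add_of (Idf 1) (Idf 2))"

lemma eval_mult_prog: "eval mult_prog [x, y] (x * y)"
  unfolding mult_prog_def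
  by (rule eval_Prf_iterate[where h = "\<lambda>k. k * y"]) (auto intro!: eval_add_of eval_Idf_eq eval.zero)

definition mult_of :: "recf \<Rightarrow> recf \<Rightarrow> recf" where
  "mult_of a b = Cnf mult_prog [a, b]"

lemma eval_mult_of: "eval a xs x \<Longrightarrow> eval b xs y \<Longrightarrow> z = x * y \<Longrightarrow> eval (mult_of a b) xs z"
  unfolding mult_of_def using eval_Cnf2 eval_mult_prog by blast

definition pred_prog :: recf where
  "pred_prog = Prf Zf (Idf 0)"

lemma eval_pred_prog: "eval pred_prog [x] (x - 1)"
  unfolding pred_prog_def
  by (rule eval_Prf_iterate[where h = "\<lambda>k. k - 1"]) (auto intro!: eval_Idf_eq eval.zero)

definition pred_of :: "recf \<Rightarrow> recf" where
  "pred_of a = Cnf pred_prog [a]"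

lemma eval_pred_of: "eval a xs x \<Longrightarrow> z = x - 1 \<Longrightarrow> eval (pred_of a) xs z"
  unfolding pred_of_def using eval_Cnf1 eval_pred_prog by blast

definition sgn_prog :: recf where
  "sgn_prog = Prf Zf (recf_const 1)"

lemma eval_sgn_prog: "eval sgn_prog [x] (if x = 0 then 0 else 1)"
  unfolding sgn_prog_def
  by (rule eval_Prf_iterate[where h = "\<lambda>k. if k = 0 then 0 else 1"])
    (auto intro!: eval_recf_const eval.zero simp del: recf_const.simps)

definition sgn_of :: "recf \<Rightarrow> recf" where
  "sgn_of a = Cnf sgn_prog [a]"

lemma eval_sgn_of: "eval a xs x \<Longrightarrow> z = (if x = 0 then 0 else 1) \<Longrightarrow> eval (sgn_of a) xs z"
  unfolding sgn_of_def using eval_Cnf1 eval_sgn_prog by blast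

definition is_zero_prog :: recf where
  "is_zero_prog = Prf (recf_const 1) Zf"

lemma eval_is_zero_prog: "eval is_zero_prog [x] (if x = 0 then 1 else 0)"
  unfolding is_zero_prog_def
  by (rule eval_Prf_iterate[where h = "\<lambda>k. if k = 0 then 1 else 0"])
    (auto intro!: eval_recf_const eval.zero simp del: recf_const.simps)

definition is_zero_of :: "recf \<Rightarrow> recf" where
  "is_zero_of a = Cnf is_zero_prog [a]"

lemma eval_is_zero_of: "eval a xs x \<Longrightarrow> z = (if x = 0 then 1 else 0) \<Longrightarrow> eval (is_zero_of a) xs z"
  unfolding is_zero_of_def using eval_Cnf1 eval_is_zero_prog by blast

definition diff_prog :: recf where
  "diff_prog = Cnf (Prf (Idf 0) (pred_of (Idf 1))) [Idf 1, Idf 0]"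

lemma eval_diff_prog: "eval diff_prog [x, y] (x - y)"
proof -
  have "eval (Prf (Idf 0) (pred_of (Idf 1))) [y, x] (x - y)"
    by (rule eval_Prf_iterate[where h = "\<lambda>k. x - k"]) (auto intro!: eval_pred_of eval_Idf_eq)
  then show ?thesis
    unfolding diff_prog_def by (auto intro!: eval_Cnf2 eval_Idf_eq)
qed

definition diff_of :: "recf \<Rightarrow> recf \<Rightarrow> recf" where
  "diff_of a b = Cnf diff_prog [a, b]"

lemma eval_diff_of: "eval a xs x \<Longrightarrow> eval b xs y \<Longrightarrow> z = x - y \<Longrightarrow> eval (diff_of a b) xs z"
  unfolding diff_of_def using eval_Cnf2 eval_diff_prog by blast

definition eq_prog :: recf where
  "eq_prog = is_zero_of (add_of (diff_of (Idf 0) (Idf 1)) (diff_of (Idf 1) (Idf 0)))"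

lemma eval_eq_prog: "eval eq_prog [x, y] (if x = y then 1 else 0)"
  unfolding eq_prog_def
  by (rule eval_is_zero_of[OF eval_add_of[OF eval_diff_of eval_diff_of]])
    (auto intro: eval_Idf_eq)

definition eq_of :: "recf \<Rightarrow> recf \<Rightarrow> recf" where
  "eq_of a b = Cnf eq_prog [a, b]"

lemma eval_eq_of:
  "eval a xs x \<Longrightarrow> eval b xs y \<Longrightarrow> z = (if x = y then 1 else 0) \<Longrightarrow> eval (eq_of a b) xs z"
  unfolding eq_of_def using eval_Cnf2 eval_eq_prog by blast

definition triangle_prog :: recf where
  "triangle_prog = Prf Zf (Cnf Sf [add_of (Idf 0) (Idf 1)])"

lemma eval_triangle_prog: "eval triangle_prog [n] (triangle n)"
  unfolding triangle_prog_def
  by (rule eval_Prf_iterate[where h = triangle])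
    (auto intro!: eval_Cnf1 eval_add_of eval_Idf_eq eval_Sf_eq eval.zero)

definition pair_of :: "recf \<Rightarrow> recf \<Rightarrow> recf" where
  "pair_of a b = add_of (Cnf triangle_prog [add_of a b]) a"

lemma eval_pair_of:
  "eval a xs x \<Longrightarrow> eval b xs y \<Longrightarrow> z = prod_encode (x, y) \<Longrightarrow> eval (pair_of a b) xs z"
  unfolding pair_of_def prod_encode_def
  by (auto intro!: eval_add_of eval_Cnf1 eval_triangle_prog)

fun list_enc_of :: "recf list \<Rightarrow> recf" where
  "list_enc_of [] = Zf"
| "list_enc_of (p # ps) = Cnf Sf [pair_of p (list_enc_of ps)]"

lemma eval_list_enc_of:
  "list_all2 (\<lambda>p y. eval p xs y) ps ys \<Longrightarrow> eval (list_enc_of ps) xs (list_encode ys)"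
  by (induction ps ys rule: list_all2_induct) (auto intro!: eval.zero eval_Cnf1 eval_pair_of eval_Sf_eq)

definition cnf_code_of :: "recf \<Rightarrow> recf list \<Rightarrow> recf" where
  "cnf_code_of a bs = pair_of (recf_const 3) (pair_of a (list_enc_of bs))"

lemma eval_cnf_code_of:
  assumes "eval a xs (recf_encode f)" and "list_all2 (\<lambda>b g. eval b xs (recf_encode g)) bs gs"
  shows "eval (cnf_code_of a bs) xs (recf_encode (Cnf f gs))"
  unfolding cnf_code_of_def using assms
  by (auto simp: list_all2_map2 intro!: eval_pair_of eval_recf_const eval_list_enc_of
      simp del: recf_const.simps)

definition const_code_prog :: recf where
  "const_code_prog = Prf (recf_const (recf_encode Zf)) (cnf_code_of (recf_const (recf_encode Sf)) [Idf 1])"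

lemma eval_const_code_prog: "eval const_code_prog [n] (recf_encode (recf_const n))"
  unfolding const_code_prog_def
proof (rule eval_Prf_iterate[where h = "\<lambda>k. recf_encode (recf_const k)"])
  show "eval (recf_const (recf_encode Zf)) [] (recf_encode (recf_const 0))"
    by (rule eval_recf_const) simp
  show "eval (cnf_code_of (recf_const (recf_encode Sf)) [Idf 1]) [k, recf_encode (recf_const k)]
      (recf_encode (recf_const (Suc k)))" for k
    unfolding recf_const.simps(2)
    by (rule eval_cnf_code_of) (auto intro!: eval_recf_const eval_Idf_eq simp del: recf_const.simps)
qed simp

section \<open>Step-bounded evaluation\<close>

fun rec_opt :: "nat option \<Rightarrow> (nat \<Rightarrow> nat \<Rightarrow> nat option) \<Rightarrow> nat \<Rightarrow> nat option" where
  "rec_opt b s 0 = b"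
| "rec_opt b s (Suc k) = Option.bind (rec_opt b s k) (s k)"

text \<open>State of the search for the least zero of \<open>v\<close> after inspecting \<open>v 0, \<dots>, v (j - 1)\<close>:
  \<open>0\<close> while all values are positive, \<open>1\<close> once an undefined value was met, \<open>i + 2\<close> once
  the least zero was found at \<open>i\<close>.\<close>

fun mu_state :: "(nat \<Rightarrow> nat option) \<Rightarrow> nat \<Rightarrow> nat" where
  "mu_state v 0 = 0"
| "mu_state v (Suc j) = (if mu_state v j \<noteq> 0 then mu_state v j else
     (case v j of None \<Rightarrow> 1 | Some 0 \<Rightarrow> j + 2 | Some (Suc _) \<Rightarrow> 0))"

definition mu_search :: "(nat \<Rightarrow> nat option) \<Rightarrow> nat \<Rightarrow> nat option" where
  "mu_search v t = (case mu_state v t of Suc (Suc j) \<Rightarrow> Some j | _ \<Rightarrow> None)"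

lemma mu_state_eq_0_iff: "mu_state v t = 0 \<longleftrightarrow> (\<forall>i<t. \<exists>a. v i = Some (Suc a))"
proof (induction t)
  case (Suc t)
  then show ?case by (auto simp: less_Suc_eq split: option.split nat.split)
qed simp

lemma mu_state_eq_Suc_Suc_iff:
  "mu_state v t = Suc (Suc y) \<longleftrightarrow> y < t \<and> v y = Some 0 \<and> (\<forall>i<y. \<exists>a. v i = Some (Suc a))"
proof (induction t)
  case (Suc t)
  show ?case
  proof (cases "mu_state v t = 0")
    case True
    then show ?thesis using Suc.IH mu_state_eq_0_iff[of v t]
      by (auto simp: less_Suc_eq split: option.split nat.split)
  next
    case False
    then show ?thesis using Suc.IH mu_state_eq_0_iff[of v t]
      by (auto simp: less_Suc_eq)
  qed
qed simp

lemma mu_search_eq_Some_iff: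
  "mu_search v t = Some y \<longleftrightarrow> y < t \<and> v y = Some 0 \<and> (\<forall>i<y. \<exists>a. v i = Some (Suc a))"
proof -
  have "mu_search v t = Some y \<longleftrightarrow> mu_state v t = Suc (Suc y)"
    unfolding mu_search_def by (auto split: nat.split)
  then show ?thesis using mu_state_eq_Suc_Suc_iff by blast
qed

text \<open>Only the unbounded search consumes the clock \<open>t\<close>: it inspects the arguments below \<open>t\<close>.\<close>

fun clocked_eval :: "nat \<Rightarrow> recf \<Rightarrow> nat list \<Rightarrow> nat option" where
  "clocked_eval t Zf xs = Some 0"
| "clocked_eval t Sf xs = (case xs of [] \<Rightarrow> None | x # _ \<Rightarrow> Some (Suc x))"
| "clocked_eval t (Idf i) xs = (if i < length xs then Some (xs ! i) else None)"
| "clocked_eval t (Cnf f gs) xs =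
     (if None \<in> set (map (\<lambda>g. clocked_eval t g xs) gs) then None
      else clocked_eval t f (map (\<lambda>g. the (clocked_eval t g xs)) gs))"
| "clocked_eval t (Prf f g) xs = (case xs of [] \<Rightarrow> None
     | n # ys \<Rightarrow> rec_opt (clocked_eval t f ys) (\<lambda>k y. clocked_eval t g (k # y # ys)) n)"
| "clocked_eval t (Mnf f) xs = mu_search (\<lambda>i. clocked_eval t f (i # xs)) t"

lemma rec_opt_mono:
  assumes "\<And>z. b = Some z \<Longrightarrow> b' = Some z" and "\<And>k y z. s k y = Some z \<Longrightarrow> s' k y = Some z"
  shows "rec_opt b s n = Some z \<Longrightarrow> rec_opt b' s' n = Some z"
  by (induction n arbitrary: z) (auto simp: assms bind_eq_Some_conv)

lemma clocked_eval_mono: "clocked_eval t q xs = Some y \<Longrightarrow> t \<le> t' \<Longrightarrow> clocked_eval t' q xs = Some y"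
proof (induction q arbitrary: xs y)
  case (Cnf f gs)
  have defined: "\<forall>g\<in>set gs. clocked_eval t g xs \<noteq> None"
    using Cnf.prems(1) by (force split: if_splits)
  then have "\<forall>g\<in>set gs. clocked_eval t' g xs = clocked_eval t g xs"
    using Cnf.IH(2) Cnf.prems(2) by fastforce
  then show ?case
    using Cnf.prems Cnf.IH(1) defined by (auto simp: image_iff cong: map_cong split: if_splits)
next
  case (Prf f g)
  then show ?case
    by (auto split: list.splits elim!: rec_opt_mono[rotated -1])
next
  case (Mnf f)
  then show ?case
    by (simp add: mu_search_eq_Some_iff) (meson order.strict_trans2)
qed simp_all

lemma rec_opt_sound:
  assumes "\<And>z. b = Some z \<Longrightarrow> eval f ys z" and "\<And>k y z. s k y = Some z \<Longrightarrow> eval g (k # y # ys) z"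
  shows "rec_opt b s n = Some z \<Longrightarrow> eval (Prf f g) (n # ys) z"
  by (induction n arbitrary: z) (auto simp: bind_eq_Some_conv intro: assms eval.intros)

lemma clocked_eval_sound: "clocked_eval t q xs = Some y \<Longrightarrow> eval q xs y"
proof (induction q arbitrary: xs y)
  case (Cnf f gs)
  then have defined: "\<forall>g\<in>set gs. clocked_eval t g xs \<noteq> None"
    by (force split: if_splits)
  show ?case
  proof (rule eval_Cnf_list_all2)
    show "list_all2 (\<lambda>g y. eval g xs y) gs (map (\<lambda>g. the (clocked_eval t g xs)) gs)"
      using defined Cnf.IH(2) by (auto simp: list_all2_conv_all_nth)
    show "eval f (map (\<lambda>g. the (clocked_eval t g xs)) gs) y"
      using Cnf.prems Cnf.IH(1) defined by (auto split: if_splits)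
  qed
next
  case (Prf f g)
  then show ?case by (auto split: list.splits elim!: rec_opt_sound[rotated -1])
next
  case (Mnf f)
  then show ?case by (fastforce simp: mu_search_eq_Some_iff intro!: eval.mu)
qed (auto intro: eval.intros split: list.splits if_splits)

lemma eval_imp_eventually_clocked_eval:
  "eval q xs y \<Longrightarrow> \<forall>\<^sub>F t in sequentially. clocked_eval t q xs = Some y"
proof (induction rule: eval.induct)
  case (comp ys gs xs f z)
  have "\<forall>\<^sub>F t in sequentially. \<forall>i\<in>{..<length gs}. clocked_eval t (gs ! i) xs = Some (ys ! i)"
    using comp.IH(1) by (intro eventually_ball_finite) auto
  with comp.IH(2) show ?case
  proof eventually_elim
    case (elim t)
    then have "map (\<lambda>g. clocked_eval t g xs) gs = map Some ys"
      and "map (\<lambda>g. the (clocked_eval t g xs)) gs = ys"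
      using comp.hyps(1) by (auto intro!: nth_equalityI)
    then show ?case using elim by (auto simp: image_iff)
  qed
next
  case (primS f g n xs y z)
  from primS.IH show ?case by eventually_elim simp
next
  case (mu f n xs)
  have "\<forall>\<^sub>F t in sequentially. \<forall>i\<in>{..<n}. \<exists>a. clocked_eval t f (i # xs) = Some (Suc a)"
    using mu.IH(2) by (intro eventually_ball_finite) (auto elim!: eventually_mono gr0_implies_Suc)
  with mu.IH(1) eventually_gt_at_top[of n] show ?case
    by eventually_elim (auto simp: mu_search_eq_Some_iff)
qed simp_all

lemma eval_iff_clocked_eval: "eval q xs y \<longleftrightarrow> (\<exists>t. clocked_eval t q xs = Some y)"
  using eval_imp_eventually_clocked_eval clocked_eval_sound
  by (meson eventually_sequentially order.refl)

fun opt_code :: "nat option \<Rightarrow> nat" where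
  "opt_code None = 0"
| "opt_code (Some y) = Suc y"

lemma opt_code_eq_0_iff: "opt_code x = 0 \<longleftrightarrow> x = None"
  by (cases x) auto

lemma zero_in_opt_code_image_iff: "0 \<in> opt_code ` A \<longleftrightarrow> None \<in> A"
proof
  assume "0 \<in> opt_code ` A"
  then show "None \<in> A" by (auto simp: opt_code_eq_0_iff)
next
  assume "None \<in> A"
  then show "0 \<in> opt_code ` A" by (force intro: image_eqI[of 0 opt_code None])
qed

definition all_pos_of :: "recf list \<Rightarrow> recf" where
  "all_pos_of ps = foldr (\<lambda>p acc. mult_of (sgn_of p) acc) ps (recf_const 1)"

lemma eval_all_pos_of:
  "list_all2 (\<lambda>p y. eval p xs y) ps ys \<Longrightarrow> eval (all_pos_of ps) xs (if 0 \<in> set ys then 0 else 1)"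
proof (induction ps ys rule: list_all2_induct)
  case Nil
  then show ?case by (simp add: all_pos_of_def eval_recf_const del: recf_const.simps)
next
  case (Cons p ps y ys)
  then show ?case by (auto simp: all_pos_of_def intro!: eval_mult_of eval_sgn_of)
qed

text \<open>A program without unbounded search: results are shifted by one so that \<open>0\<close> codes
  undefinedness, and the search of \<open>Mnf\<close> becomes a primitive recursion over the clock
  computing \<open>mu_state\<close>.\<close>

fun clocked_prog :: "nat \<Rightarrow> recf \<Rightarrow> recf" where
  "clocked_prog n Zf = recf_const 1"
| "clocked_prog n Sf = (if n = 0 then Zf else Cnf Sf [Cnf Sf [Idf 1]])"
| "clocked_prog n (Idf i) = (if i < n then Cnf Sf [Idf (Suc i)] else Zf)"
| "clocked_prog n (Cnf f gs) = mult_of (all_pos_of (map (clocked_prog n) gs))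
     (Cnf (clocked_prog (length gs) f) (Idf 0 # map (\<lambda>g. pred_of (clocked_prog n g)) gs))"
| "clocked_prog n (Prf f g) = (case n of 0 \<Rightarrow> Zf | Suc m \<Rightarrow>
     Cnf (Prf (clocked_prog m f)
            (mult_of (sgn_of (Idf 1)) (Cnf (clocked_prog (Suc (Suc m)) g)
               (Idf 2 # Idf 0 # pred_of (Idf 1) # map (\<lambda>i. Idf (i + 3)) [0..<m]))))
         (Idf 1 # Idf 0 # map (\<lambda>i. Idf (i + 2)) [0..<m]))"
| "clocked_prog n (Mnf f) =
    (let V = Cnf (clocked_prog (Suc n) f) (Idf 2 # Idf 0 # map (\<lambda>i. Idf (i + 3)) [0..<n]) in
     pred_of (Cnf (Prf Zf
       (add_of (Idf 1) (mult_of (is_zero_of (Idf 1))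
          (add_of (is_zero_of V) (mult_of (eq_of V (recf_const 1)) (Cnf Sf [Cnf Sf [Idf 0]]))))))
      (Idf 0 # Idf 0 # map (\<lambda>i. Idf (i + 1)) [0..<n])))"

definition computes_clocked :: "recf \<Rightarrow> nat \<Rightarrow> recf \<Rightarrow> bool" where
  "computes_clocked p n q \<longleftrightarrow>
     (\<forall>t xs. length xs = n \<longrightarrow> eval p (t # xs) (opt_code (clocked_eval t q xs)))"

lemma computes_clocked_Cnf:
  assumes f: "computes_clocked (clocked_prog (length gs) f) (length gs) f"
    and gs: "\<forall>g\<in>set gs. computes_clocked (clocked_prog n g) n g"
  shows "computes_clocked (clocked_prog n (Cnf f gs)) n (Cnf f gs)"
  unfolding computes_clocked_def
proof (intro allI impI)
  fix t and xs :: "nat list"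
  assume "length xs = n"
  define vs where "vs = map opt_code (map (\<lambda>g. clocked_eval t g xs) gs)"
  define ys where "ys = map (\<lambda>g. opt_code (clocked_eval t g xs) - 1) gs"
  have args: "list_all2 (\<lambda>p v. eval p (t # xs) v) (map (clocked_prog n) gs) vs"
    using gs \<open>length xs = n\<close> by (auto simp: vs_def computes_clocked_def list_all2_conv_all_nth)
  have "eval (Cnf (clocked_prog (length gs) f) (Idf 0 # map (\<lambda>g. pred_of (clocked_prog n g)) gs))
      (t # xs) (opt_code (clocked_eval t f ys))"
  proof (rule eval_Cnf_list_all2[where ys = "t # ys"])
    show "list_all2 (\<lambda>g y. eval g (t # xs) y) (Idf 0 # map (\<lambda>g. pred_of (clocked_prog n g)) gs) (t # ys)"
      unfolding list_all2_Cons ys_def list_all2_map1 list_all2_map2 list_all2_same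
      using gs \<open>length xs = n\<close> by (auto simp: computes_clocked_def intro!: eval_pred_of eval_Idf_eq)
    show "eval (clocked_prog (length gs) f) (t # ys) (opt_code (clocked_eval t f ys))"
      using f by (simp add: computes_clocked_def ys_def)
  qed
  then have "eval (clocked_prog n (Cnf f gs)) (t # xs)
      ((if 0 \<in> set vs then 0 else 1) * opt_code (clocked_eval t f ys))"
    using eval_all_pos_of[OF args] by (auto intro!: eval_mult_of)
  moreover have "(if 0 \<in> set vs then 0 else 1) * opt_code (clocked_eval t f ys) =
      opt_code (clocked_eval t (Cnf f gs) xs)"
  proof (cases "None \<in> set (map (\<lambda>g. clocked_eval t g xs) gs)")
    case True
    then have "0 \<in> set vs"
      unfolding vs_def set_map zero_in_opt_code_image_iff by simp
    with True show ?thesis by simp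
  next
    case False
    then have "ys = map (\<lambda>g. the (clocked_eval t g xs)) gs"
      unfolding ys_def
      by (intro map_cong) (metis diff_Suc_1 image_eqI opt_code.simps(2) option.collapse set_map)+
    moreover from False have "0 \<notin> set vs"
      unfolding vs_def set_map zero_in_opt_code_image_iff by simp
    ultimately show ?thesis using False by simp
  qed
  ultimately show "eval (clocked_prog n (Cnf f gs)) (t # xs) (opt_code (clocked_eval t (Cnf f gs) xs))"
    by simp
qed

lemma computes_clocked_Prf:
  assumes f: "computes_clocked (clocked_prog m f) m f"
    and g: "computes_clocked (clocked_prog (Suc (Suc m)) g) (Suc (Suc m)) g"
  shows "computes_clocked (clocked_prog (Suc m) (Prf f g)) (Suc m) (Prf f g)"
  unfolding computes_clocked_def
proof (intro allI impI)
  fix t and xs :: "nat list"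
  assume "length xs = Suc m"
  then obtain k ys where xs: "xs = k # ys" and ys: "length ys = m"
    by (cases xs) auto
  define h where "h j = opt_code (rec_opt (clocked_eval t f ys) (\<lambda>j y. clocked_eval t g (j # y # ys)) j)" for j
  define step where "step = mult_of (sgn_of (Idf 1)) (Cnf (clocked_prog (Suc (Suc m)) g)
               (Idf 2 # Idf 0 # pred_of (Idf 1) # map (\<lambda>i. Idf (i + 3)) [0..<m]))"
  have "eval step (j # h j # t # ys) (h (Suc j))" for j
  proof -
    have args: "list_all2 (\<lambda>g y. eval g (j # h j # t # ys) y)
        (Idf 2 # Idf 0 # pred_of (Idf 1) # map (\<lambda>i. Idf (i + 3)) [0..<m]) (t # j # (h j - 1) # ys)"
      using eval_Idf_shifted[of "[j, h j, t]" 3 ys] ys by (auto intro!: eval_Idf_eq eval_pred_of)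
    have "eval (Cnf (clocked_prog (Suc (Suc m)) g) (Idf 2 # Idf 0 # pred_of (Idf 1) # map (\<lambda>i. Idf (i + 3)) [0..<m]))
        (j # h j # t # ys) (opt_code (clocked_eval t g (j # (h j - 1) # ys)))"
      by (rule eval_Cnf_list_all2[OF args]) (use g ys in \<open>simp add: computes_clocked_def\<close>)
    then have "eval step (j # h j # t # ys)
        ((if h j = 0 then 0 else 1) * opt_code (clocked_eval t g (j # (h j - 1) # ys)))"
      unfolding step_def by (auto intro!: eval_mult_of eval_sgn_of eval_Idf_eq)
    then show ?thesis
      by (cases "rec_opt (clocked_eval t f ys) (\<lambda>j y. clocked_eval t g (j # y # ys)) j") (auto simp: h_def)
  qed
  moreover have "eval (clocked_prog m f) (t # ys) (h 0)"
    using f ys by (simp add: computes_clocked_def h_def)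
  ultimately have "eval (Prf (clocked_prog m f) step) (k # t # ys) (h k)"
    by (intro eval_Prf_iterate) auto
  moreover have "list_all2 (\<lambda>g y. eval g (t # k # ys) y)
      (Idf 1 # Idf 0 # map (\<lambda>i. Idf (i + 2)) [0..<m]) (k # t # ys)"
    using eval_Idf_shifted[of "[t, k]" 2 ys] ys by (auto intro!: eval_Idf_eq)
  ultimately have "eval (clocked_prog (Suc m) (Prf f g)) (t # xs) (h k)"
    unfolding xs clocked_prog.simps nat.case step_def[symmetric] by (intro eval_Cnf_list_all2)
  then show "eval (clocked_prog (Suc m) (Prf f g)) (t # xs) (opt_code (clocked_eval t (Prf f g) xs))"
    by (simp add: h_def xs)
qed

lemma opt_code_mu_search: "opt_code (mu_search v t) = mu_state v t - 1"
  unfolding mu_search_def by (auto split: nat.split)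

lemma computes_clocked_Mnf:
  assumes f: "computes_clocked (clocked_prog (Suc n) f) (Suc n) f"
  shows "computes_clocked (clocked_prog n (Mnf f)) n (Mnf f)"
  unfolding computes_clocked_def
proof (intro allI impI)
  fix t and xs :: "nat list"
  assume xs: "length xs = n"
  define v where "v = (\<lambda>i. clocked_eval t f (i # xs))"
  define V where "V = Cnf (clocked_prog (Suc n) f) (Idf 2 # Idf 0 # map (\<lambda>i. Idf (i + 3)) [0..<n])"
  define step where "step = add_of (Idf 1) (mult_of (is_zero_of (Idf 1))
          (add_of (is_zero_of V) (mult_of (eq_of V (recf_const 1)) (Cnf Sf [Cnf Sf [Idf 0]]))))"
  have "eval step (j # mu_state v j # t # xs) (mu_state v (Suc j))" for j
  proof -
    have args: "list_all2 (\<lambda>g y. eval g (j # mu_state v j # t # xs) y)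
        (Idf 2 # Idf 0 # map (\<lambda>i. Idf (i + 3)) [0..<n]) (t # j # xs)"
      using eval_Idf_shifted[of "[j, mu_state v j, t]" 3 xs] xs by (auto intro!: eval_Idf_eq)
    have "eval V (j # mu_state v j # t # xs) (opt_code (v j))"
      unfolding V_def by (rule eval_Cnf_list_all2[OF args]) (use f xs in \<open>simp add: computes_clocked_def v_def\<close>)
    then have "eval step (j # mu_state v j # t # xs)
       (mu_state v j + (if mu_state v j = 0 then 1 else 0) * ((if opt_code (v j) = 0 then 1 else 0) +
           (if opt_code (v j) = 1 then 1 else 0) * (j + 2)))"
      unfolding step_def
      by (auto intro!: eval_add_of eval_mult_of eval_is_zero_of eval_eq_of eval_Idf_eq eval_recf_const
          eval_Cnf1 eval_Sf_eq simp del: recf_const.simps)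
    then show ?thesis
      by (cases "v j"; cases "the (v j)") (auto split: option.splits nat.splits)
  qed
  then have "eval (Prf Zf step) (t # t # xs) (mu_state v t)"
    by (intro eval_Prf_iterate) (auto intro: eval.zero)
  moreover have "list_all2 (\<lambda>g y. eval g (t # xs) y)
      (Idf 0 # Idf 0 # map (\<lambda>i. Idf (i + 1)) [0..<n]) (t # t # xs)"
    using eval_Idf_shifted[of "[t]" 1 xs] xs by (auto intro!: eval_Idf_eq)
  ultimately have "eval (clocked_prog n (Mnf f)) (t # xs) (mu_state v t - 1)"
    unfolding clocked_prog.simps Let_def V_def[symmetric] step_def[symmetric]
    by (intro eval_pred_of eval_Cnf_list_all2) auto
  then show "eval (clocked_prog n (Mnf f)) (t # xs) (opt_code (clocked_eval t (Mnf f) xs))"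
    by (simp add: opt_code_mu_search v_def)
qed

lemma computes_clocked_clocked_prog: "computes_clocked (clocked_prog n q) n q"
proof (induction q arbitrary: n)
  case Zf
  then show ?case by (auto simp: computes_clocked_def intro: eval_recf_const simp del: recf_const.simps)
next
  case Sf
  show ?case
    unfolding computes_clocked_def
  proof (intro allI impI)
    fix t and xs :: "nat list"
    assume "length xs = n"
    then show "eval (clocked_prog n Sf) (t # xs) (opt_code (clocked_eval t Sf xs))"
      by (cases xs) (auto intro!: eval.zero eval_Cnf1 eval_Sf_eq eval_Idf_eq)
  qed
next
  case (Idf i)
  then show ?case by (auto simp: computes_clocked_def intro!: eval.zero eval_Cnf1 eval_Sf_eq eval_Idf_eq)
next
  case (Cnf f gs)
  then show ?case by (intro computes_clocked_Cnf) auto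
next
  case (Prf f g)
  show ?case
  proof (cases n)
    case 0
    then show ?thesis by (auto simp: computes_clocked_def intro: eval.zero)
  next
    case (Suc m)
    then show ?thesis by (simp only:) (intro computes_clocked_Prf Prf.IH)
  qed
next
  case (Mnf f)
  then show ?case by (intro computes_clocked_Mnf)
qed

section \<open>Truncated addition\<close>

text \<open>Unit \<open>1\<close>, absorbing \<open>0\<close>, and values in \<open>{x, y, 0}\<close>: every set containing \<open>0\<close> is
  closed under it.\<close>

definition simple_mult :: "nat \<Rightarrow> nat \<Rightarrow> nat" where
  "simple_mult x y = (if x = 1 then y else if y = 0 then 0 else x)"

lemma simple_mult_assoc: "simple_mult (simple_mult x y) z = simple_mult x (simple_mult y z)"
  unfolding simple_mult_def by auto

lemma strong_bimonoid_truncated_add: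
  fixes c :: "nat \<Rightarrow> nat"
  assumes absorb: "\<And>x y. c (c x + y) = c (x + y)" and "c 0 = 0" and "c 1 = 1"
  shows "strong_bimonoid {x. c x = x} (\<lambda>x y. c (x + y)) simple_mult 0 1"
proof -
  have "c (x + c y) = c (x + y)" for x y
    using absorb[of y x] by (simp add: add.commute)
  moreover have "c (c x) = c x" for x
    using absorb[of x 0] by simp
  ultimately show ?thesis
    unfolding strong_bimonoid_def using assms
    by (auto simp: simple_mult_assoc ac_simps) (auto simp: simple_mult_def)
qed

lemma nfold_truncated_add:
  fixes c :: "nat \<Rightarrow> nat"
  assumes absorb: "\<And>x y. c (c x + y) = c (x + y)" and "c 0 = 0"
  shows "nfold (\<lambda>x y. c (x + y)) 0 n 1 = c n"
proof (induction n)
  case 0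
  then show ?case by (simp add: nfold_def \<open>c 0 = 0\<close>)
next
  case (Suc n)
  then show ?case using absorb[of n 1] by (simp add: nfold_def add.commute)
qed

lemma finite_order_truncated_add_one:
  fixes c :: "nat \<Rightarrow> nat"
  assumes "\<And>x y. c (c x + y) = c (x + y)" and "c 0 = 0"
  shows "finite_order (\<lambda>x y. c (x + y)) 0 1 \<longleftrightarrow> finite (range c)"
  unfolding finite_order_def nfold_truncated_add[OF assms] by (simp add: full_SetCompr_eq)

fun count_false :: "(nat \<Rightarrow> bool) \<Rightarrow> nat \<Rightarrow> nat" where
  "count_false P 0 = 0"
| "count_false P (Suc n) = count_false P n + (if P n then 0 else 1)"

lemma count_false_never: "\<forall>s. \<not> P s \<Longrightarrow> count_false P n = n"
  by (induction n) auto

lemma count_false_mono_eq_min: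
  assumes "mono P" and "P L" and "\<forall>s<L. \<not> P s"
  shows "count_false P n = min n L"
proof (induction n)
  case (Suc n)
  show ?case
  proof (cases "n < L")
    case False
    then have "P n" using assms(1,2) by (auto dest: monoD[of P L n])
    then show ?thesis using Suc False by auto
  qed (use Suc assms(3) in auto)
qed simp

lemma count_false_mono_cases:
  assumes "mono P"
  obtains "\<forall>s. \<not> P s" and "count_false P = id"
  | L where "P L" and "count_false P = (\<lambda>n. min n L)"
proof (cases "\<exists>s. P s")
  case True
  define L where "L = (LEAST s. P s)"
  have "P L" "\<forall>s<L. \<not> P s"
    unfolding L_def using True by (auto intro: LeastI_ex dest: not_less_Least)
  then show ?thesis using that(2) count_false_mono_eq_min[OF assms] by blast
next
  case False
  then show ?thesis using that(1) count_false_never by fastforce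
qed

lemma count_false_absorb:
  assumes "mono P"
  shows "count_false P (count_false P x + y) = count_false P (x + y)"
  using assms by (cases rule: count_false_mono_cases) auto

lemma finite_range_count_false_iff:
  assumes "mono P"
  shows "finite (range (count_false P)) \<longleftrightarrow> (\<exists>s. P s)"
  using assms
proof (cases rule: count_false_mono_cases)
  case (2 L)
  then have "range (count_false P) \<subseteq> {..L}" by auto
  then show ?thesis using 2 finite_subset by blast
qed auto

section \<open>The diagonal instance\<close>

definition simple_mult_prog :: recf where
  "simple_mult_prog = add_of (mult_of (eq_of (Idf 0) (recf_const 1)) (Idf 1))
     (mult_of (is_zero_of (eq_of (Idf 0) (recf_const 1))) (mult_of (Idf 0) (sgn_of (Idf 1))))"

lemma eval_simple_mult_prog: "eval simple_mult_prog [x, y] (simple_mult x y)"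
  unfolding simple_mult_prog_def
  by (auto simp: simple_mult_def simp del: recf_const.simps
      intro!: eval_add_of eval_mult_of eval_eq_of eval_is_zero_of eval_sgn_of eval_Idf_eq eval_recf_const)

text \<open>One constant symbol, one state, transition and root weight \<open>1\<close>: the finite order
  property only concerns the element \<open>1\<close>.\<close>

definition trunc_instance :: "recf \<Rightarrow> nat \<Rightarrow> wta_inst" where
  "trunc_instance G k =
     \<lparr>rk = [0], memB = eq_of (Cnf G [Idf 0, recf_const 0, recf_const k]) (Idf 0),
      addB = Cnf G [Idf 0, Idf 1, recf_const k], mulB = simple_mult_prog, zeroB = 0, oneB = 1,
      nQ = 1, dtab = [(([], 0, 0), 1)], Fl = [1]\<rparr>"

lemma trunc_instance_sel:
  "rk (trunc_instance G k) = [0]"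
  "memB (trunc_instance G k) = eq_of (Cnf G [Idf 0, recf_const 0, recf_const k]) (Idf 0)"
  "addB (trunc_instance G k) = Cnf G [Idf 0, Idf 1, recf_const k]"
  "mulB (trunc_instance G k) = simple_mult_prog" "zeroB (trunc_instance G k) = 0"
  "oneB (trunc_instance G k) = 1" "nQ (trunc_instance G k) = 1"
  "dtab (trunc_instance G k) = [(([], 0, 0), 1)]" "Fl (trunc_instance G k) = [1]"
  by (simp_all add: trunc_instance_def)

lemma timesI_trunc_instance: "timesI (trunc_instance G k) = simple_mult"
  unfolding timesI_def trunc_instance_sel
  using eval_simple_mult_prog eval_deterministic by (auto intro!: ext)

lemma wta_H_trunc_instance:
  "wta_H (timesI (trunc_instance G k)) (SigI (trunc_instance G k)) (rankI (trunc_instance G k))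
     (QI (trunc_instance G k)) (deltaI (trunc_instance G k)) = {1}"
proof -
  have "im_delta (SigI (trunc_instance G k)) (rankI (trunc_instance G k))
     (QI (trunc_instance G k)) (deltaI (trunc_instance G k)) = {1}"
    unfolding im_delta_def SigI_def rankI_def QI_def deltaI_def by (auto simp: trunc_instance_sel)
  moreover have "mult_closure simple_mult {1} = {1}"
  proof (intro equalityI subsetI)
    show "x \<in> {1}" if "x \<in> mult_closure simple_mult {1}" for x
      using that by induction (auto simp: simple_mult_def)
  qed (auto intro: mult_closure.base)
  ultimately show ?thesis
    unfolding wta_H_def timesI_trunc_instance by simp
qed

context
  fixes G :: recf and k :: nat and c :: "nat \<Rightarrow> nat"
  assumes eval_G: "\<And>x y. eval G [x, y, k] (c (x + y))"
begin

lemma eval_memB_trunc_instance: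
  "eval (memB (trunc_instance G k)) [x] (if c x = x then 1 else 0)"
  unfolding trunc_instance_sel
  by (auto intro!: eval_eq_of eval_Cnf3[OF _ _ _ eval_G] eval_Idf_eq eval_recf_const
      simp del: recf_const.simps)

lemma eval_addB_trunc_instance: "eval (addB (trunc_instance G k)) [x, y] (c (x + y))"
  unfolding trunc_instance_sel
  by (auto intro!: eval_Cnf3[OF _ _ _ eval_G] eval_Idf_eq eval_recf_const simp del: recf_const.simps)

lemma Bset_trunc_instance: "Bset (trunc_instance G k) = {x. c x = x}"
proof -
  have "eval (memB (trunc_instance G k)) [x] 1 \<longleftrightarrow> c x = x" for x
    using eval_memB_trunc_instance[of x] eval_deterministic by (cases "c x = x") fastforce+
  then show ?thesis unfolding Bset_def by blast
qed

lemma plusI_trunc_instance: "plusI (trunc_instance G k) = (\<lambda>x y. c (x + y))"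
  unfolding plusI_def using eval_addB_trunc_instance eval_deterministic by (auto intro!: ext)

lemma fop_trunc_instance_iff:
  assumes "\<And>x y. c (c x + y) = c (x + y)" and "c 0 = 0"
  shows "fop_instance (trunc_instance G k) \<longleftrightarrow> finite (range c)"
proof -
  have "FI (trunc_instance G k) ` QI (trunc_instance G k) = {1}"
    unfolding FI_def QI_def by (auto simp: trunc_instance_sel)
  then have "fop_instance (trunc_instance G k) \<longleftrightarrow> finite_order (\<lambda>x y. c (x + y)) 0 1"
    unfolding fop_instance_def finite_order_property_def wta_H_trunc_instance plusI_trunc_instance
    by (simp add: timesI_trunc_instance simple_mult_def trunc_instance_sel)
  then show ?thesis
    using finite_order_truncated_add_one[OF assms] by simp
qed

lemma valid_trunc_instance:
  assumes "\<And>x y. c (c x + y) = c (x + y)" and "c 0 = 0" and "c 1 = 1"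
  shows "valid_instance (trunc_instance G k)"
  unfolding valid_instance_def
proof (intro conjI)
  show "\<forall>x. eval (memB (trunc_instance G k)) [x] 0 \<or> eval (memB (trunc_instance G k)) [x] 1"
    using eval_memB_trunc_instance by (metis (full_types))
  show "\<forall>x\<in>Bset (trunc_instance G k). \<forall>y\<in>Bset (trunc_instance G k).
      \<exists>z. eval (addB (trunc_instance G k)) [x, y] z"
    using eval_addB_trunc_instance by blast
  show "\<forall>x\<in>Bset (trunc_instance G k). \<forall>y\<in>Bset (trunc_instance G k).
      \<exists>z. eval (mulB (trunc_instance G k)) [x, y] z"
    using eval_simple_mult_prog by (auto simp: trunc_instance_sel)
  show "strong_bimonoid (Bset (trunc_instance G k)) (plusI (trunc_instance G k))
      (timesI (trunc_instance G k)) (zeroB (trunc_instance G k)) (oneB (trunc_instance G k))"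
    unfolding Bset_trunc_instance plusI_trunc_instance timesI_trunc_instance trunc_instance_sel
    using strong_bimonoid_truncated_add[OF assms] .
  show "bu_deterministic (zeroB (trunc_instance G k)) (SigI (trunc_instance G k))
      (rankI (trunc_instance G k)) (QI (trunc_instance G k)) (deltaI (trunc_instance G k))"
    unfolding bu_deterministic_def QI_def by (simp add: trunc_instance_sel)
qed (use assms in \<open>auto simp: trunc_instance_sel Bset_trunc_instance SigI_def QI_def\<close>)

end

text \<open>The shift by one makes the predicate false at \<open>0\<close>, so that \<open>1\<close> survives the truncation.\<close>

definition answers_zero_within :: "recf \<Rightarrow> nat \<Rightarrow> nat \<Rightarrow> bool" where
  "answers_zero_within D e s \<longleftrightarrow> 0 < s \<and> clocked_eval (s - 1) D [e] = Some 0"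

lemma mono_answers_zero_within: "mono (answers_zero_within D e)"
  unfolding answers_zero_within_def
  by (intro monoI le_boolI) (auto intro: clocked_eval_mono)

lemma ex_answers_zero_within_iff: "(\<exists>s. answers_zero_within D e s) \<longleftrightarrow> eval D [e] 0"
  unfolding answers_zero_within_def eval_iff_clocked_eval
  by (metis diff_Suc_1 zero_less_Suc)

definition answers_zero_prog :: "recf \<Rightarrow> recf" where
  "answers_zero_prog D =
     mult_of (sgn_of (Idf 0)) (eq_of (Cnf (clocked_prog 1 D) [pred_of (Idf 0), Idf 1]) (recf_const 1))"

lemma eval_answers_zero_prog:
  "eval (answers_zero_prog D) [s, e] (if answers_zero_within D e s then 1 else 0)"
proof -
  have "eval (Cnf (clocked_prog 1 D) [pred_of (Idf 0), Idf 1]) [s, e] (opt_code (clocked_eval (s - 1) D [e]))"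
    using computes_clocked_clocked_prog[of 1 D]
    by (auto simp: computes_clocked_def intro!: eval_Cnf2 eval_pred_of eval_Idf_eq)
  then have "eval (answers_zero_prog D) [s, e]
      ((if s = 0 then 0 else 1) * (if opt_code (clocked_eval (s - 1) D [e]) = 1 then 1 else 0))"
    unfolding answers_zero_prog_def
    by (intro eval_mult_of[OF eval_sgn_of[OF eval_Idf_eq] eval_eq_of[OF _ eval_recf_const]]) auto
  then show ?thesis
    unfolding answers_zero_within_def by (cases "clocked_eval (s - 1) D [e]") auto
qed

definition count_answers_prog :: "recf \<Rightarrow> recf" where
  "count_answers_prog D = Prf Zf (add_of (Idf 1) (is_zero_of (Cnf (answers_zero_prog D) [Idf 0, Idf 2])))"

lemma eval_count_answers_prog:
  "eval (count_answers_prog D) [n, e] (count_false (answers_zero_within D e) n)"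
  unfolding count_answers_prog_def
  by (rule eval_Prf_iterate[where h = "count_false (answers_zero_within D e)"])
    (auto intro!: eval.zero eval_add_of eval_is_zero_of eval_Cnf2[OF _ _ eval_answers_zero_prog]
      eval_Idf_eq)

definition mem_code_prog :: recf where
  "mem_code_prog = cnf_code_of (recf_const (recf_encode eq_prog))
     [cnf_code_of (Idf 0) [recf_const (recf_encode (Idf 0)), recf_const (recf_encode (recf_const 0)),
        Cnf const_code_prog [Idf 0]],
      recf_const (recf_encode (Idf 0))]"

definition add_code_prog :: recf where
  "add_code_prog = cnf_code_of (Idf 0)
     [recf_const (recf_encode (Idf 0)), recf_const (recf_encode (Idf 1)), Cnf const_code_prog [Idf 0]]"

text \<open>Computes the code of \<open>trunc_instance G k\<close> from \<open>k\<close> alone, for the \<open>G\<close> whose code is \<open>k\<close>.\<close>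

definition instance_code_prog :: recf where
  "instance_code_prog = list_enc_of
     [recf_const (list_encode [0]), mem_code_prog, add_code_prog,
      recf_const (recf_encode simple_mult_prog), recf_const 0, recf_const 1, recf_const 1,
      recf_const (list_encode [prod_encode (prod_encode (list_encode [], prod_encode (0, 0)), 1)]),
      recf_const (list_encode [1])]"

lemma eval_instance_code_prog:
  assumes "recf_encode G = k"
  shows "eval instance_code_prog [k] (encode_instance (trunc_instance G k))"
proof -
  have G: "eval (Idf 0) [k] (recf_encode G)"
    using assms by (auto intro: eval_Idf_eq)
  have const_k: "eval (Cnf const_code_prog [Idf 0]) [k] (recf_encode (recf_const k))"
    by (rule eval_Cnf1[OF _ eval_const_code_prog]) (auto intro: eval_Idf_eq)
  have "eval mem_code_prog [k] (recf_encode (memB (trunc_instance G k)))"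
    unfolding mem_code_prog_def trunc_instance_sel eq_of_def
    by (auto intro!: eval_cnf_code_of G const_k eval_recf_const
        simp del: recf_const.simps recf_encode.simps)
  moreover have "eval add_code_prog [k] (recf_encode (addB (trunc_instance G k)))"
    unfolding add_code_prog_def trunc_instance_sel
    by (auto intro!: eval_cnf_code_of G const_k eval_recf_const
        simp del: recf_const.simps recf_encode.simps)
  ultimately show ?thesis
    unfolding instance_code_prog_def encode_instance_def
    by (intro eval_list_enc_of)
      (auto simp: trunc_instance_sel intro!: eval_recf_const simp del: recf_const.simps recf_encode.simps)
qed

definition diag_add_prog :: "recf \<Rightarrow> recf" where
  "diag_add_prog D = Cnf (count_answers_prog D) [add_of (Idf 0) (Idf 1), Cnf instance_code_prog [Idf 2]]"

definition diag_instance :: "recf \<Rightarrow> wta_inst" where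
  "diag_instance D = trunc_instance (diag_add_prog D) (recf_encode (diag_add_prog D))"

lemma eval_diag_add_prog:
  "eval (diag_add_prog D) [x, y, recf_encode (diag_add_prog D)]
     (count_false (answers_zero_within D (encode_instance (diag_instance D))) (x + y))"
proof -
  define k where "k = recf_encode (diag_add_prog D)"
  have "eval (Cnf instance_code_prog [Idf 2]) [x, y, k] (encode_instance (diag_instance D))"
    unfolding diag_instance_def k_def
    by (rule eval_Cnf1[OF _ eval_instance_code_prog[OF refl]]) (auto intro: eval_Idf_eq)
  then have "eval (diag_add_prog D) [x, y, k]
      (count_false (answers_zero_within D (encode_instance (diag_instance D))) (x + y))"
    unfolding diag_add_prog_def
    by (auto intro!: eval_Cnf2[OF _ _ eval_count_answers_prog] eval_add_of eval_Idf_eq)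
  then show ?thesis
    by (simp only: k_def)
qed

lemma valid_diag_instance: "valid_instance (diag_instance D)"
  unfolding diag_instance_def
  by (rule valid_trunc_instance[OF eval_diag_add_prog[unfolded diag_instance_def]])
    (rule count_false_absorb[OF mono_answers_zero_within], simp, simp add: answers_zero_within_def)

lemma fop_diag_instance_iff:
  "fop_instance (diag_instance D) \<longleftrightarrow> eval D [encode_instance (diag_instance D)] 0"
proof -
  let ?P = "answers_zero_within D (encode_instance (diag_instance D))"
  have "fop_instance (diag_instance D) \<longleftrightarrow> finite (range (count_false ?P))"
    unfolding diag_instance_def
    by (rule fop_trunc_instance_iff[OF eval_diag_add_prog[unfolded diag_instance_def]])
      (rule count_false_absorb[OF mono_answers_zero_within], simp)
  also have "\<dots> \<longleftrightarrow> (\<exists>s. ?P s)"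
    by (rule finite_range_count_false_iff[OF mono_answers_zero_within])
  finally show ?thesis
    by (simp add: ex_answers_zero_within_iff)
qed

theorem theorem8p9:
  shows "\<not> (\<exists>D. \<forall>I. valid_instance I \<longrightarrow>
              eval D [encode_instance I] (if fop_instance I then 1 else 0))"
proof
  assume "\<exists>D. \<forall>I. valid_instance I \<longrightarrow>
              eval D [encode_instance I] (if fop_instance I then 1 else 0)"
  then obtain D where
    "eval D [encode_instance (diag_instance D)] (if fop_instance (diag_instance D) then 1 else 0)"
    using valid_diag_instance by blast
  then show False
    using fop_diag_instance_iff[of D] eval_deterministic
    by (cases "fop_instance (diag_instance D)") force+
qed

end
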